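(* Fix integers $e>1$ and $k\ge1$, and let $m>3$ be a vertex of the finite tree $\mathcal{T}_{e,3}^k$. Then the number of children of $m$ in $\mathcal{T}_{e,3}^k$ equals $$\sum_{j=0}^{\lfloor m/2^e\rfloor}\binom{k}{j}\binom{k-j}{m-j\cdot 2^e}.$$
   Context: For integers $b>1$, $e>1$ and a positive integer $n=\sum_{i=0}^{r} d_i b^i$ written in base $b$ (digits $0\le d_i\le b-1$), the $e$-power base-$b$ happy function is $S_{e,b}(n)=\sum_{i=0}^{r} d_i^e$. A positive integer $n$ is $e$-power $b$-happy if $S_{e,b}^{\ell}(n)=1$ for some $\ell\ge 1$. The tree $\mathcal{T}_{e,b}$ has as vertices all $e$-power $b$-happy numbers, with root $1$; a happy number $n\neq 1$ is a child of the vertex $S_{e,b}(n)$. For $k\ge1$, $\mathcal{T}_{e,b}^k$ is the subtree on the happy numbers having at most $k$ digits in base $b$ (i.e. $n<b^k$); thus the children of a vertex $m$ in $\mathcal{T}_{e,b}^k$ are the happy integers $n$ with $1\le n<b^k$, $n\neq1$, and $S_{e,b}(n)=m$. Binomial coefficients $\binom{a}{c}$ are taken to be $0$ when $c<0$ or $c>a$ (including when $a<0$). *)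

theory Defs
  imports Main
begin

function happy_S :: "nat \<Rightarrow> nat \<Rightarrow> nat \<Rightarrow> nat" where
  "happy_S e b n = (if n = 0 \<or> b \<le> 1 then 0 else (n mod b) ^ e + happy_S e b (n div b))"
  by pat_completeness auto
termination by (relation "measure (\<lambda>(e, b, n). n)") auto

definition happy :: "nat \<Rightarrow> nat \<Rightarrow> nat \<Rightarrow> bool" where
  "happy e b n \<longleftrightarrow> n \<ge> 1 \<and> (\<exists>l\<ge>1. (happy_S e b ^^ l) n = 1)"

definition tree_vertex :: "nat \<Rightarrow> nat \<Rightarrow> nat \<Rightarrow> nat \<Rightarrow> bool" where
  "tree_vertex e b k n \<longleftrightarrow> happy e b n \<and> n < b ^ k"

definition tree_children :: "nat \<Rightarrow> nat \<Rightarrow> nat \<Rightarrow> nat \<Rightarrow> nat set" where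
  "tree_children e b k m = {n. 1 \<le> n \<and> n < b ^ k \<and> n \<noteq> 1 \<and> happy e b n \<and> happy_S e b n = m}"

end

theory Submission
  imports Defs
begin

text \<open>
  For \<open>n < 3^k\<close> with \<open>a\<close> digits equal to 1 and \<open>b\<close> digits equal to 2 among its
  \<open>k\<close> ternary digits, \<open>S(n) = a + b 2^e\<close>. There are \<open>binom k b * binom (k-b) a\<close>
  such \<open>n\<close> (choose the positions of the 2s, then of the 1s), so the preimages of \<open>m\<close>
  below \<open>3^k\<close> are counted by summing over \<open>b = j \<le> m div 2^e\<close> with \<open>a = m - j 2^e\<close>.
  As \<open>m \<noteq> 0, 1\<close> is happy, these preimages are exactly the children of \<open>m\<close>.
\<close>

(* The defining equation of happy_S has no guard simp can decide, so it would unfold forever. *)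
declare happy_S.simps [simp del]

lemma happy_S_0 [simp]: "happy_S e b 0 = 0"
  by (subst happy_S.simps) simp

lemma happy_S_1: "b > 1 \<Longrightarrow> happy_S e b 1 = 1"
  by (subst happy_S.simps) simp

lemma happy_S_digit:
  assumes "b > 1" "e > 0"
  shows "happy_S e b n = (n mod b) ^ e + happy_S e b (n div b)"
  using assms by (cases "n = 0") (simp, subst happy_S.simps, simp)

fun digit_count :: "nat \<Rightarrow> nat \<Rightarrow> nat \<Rightarrow> nat \<Rightarrow> nat" where
  "digit_count b d 0 n = 0"
| "digit_count b d (Suc k) n = of_bool (n mod b = d) + digit_count b d k (n div b)"

lemma happy_S_eq_sum_digit_count:
  assumes "b > 1" "e > 0" "n < b ^ k"
  shows "happy_S e b n = (\<Sum>d<b. digit_count b d k n * d ^ e)"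
  using assms(3)
proof (induction k arbitrary: n)
  case 0
  then show ?case by simp
next
  case (Suc k)
  have "n div b < b ^ k"
    using Suc.prems by (metis less_mult_imp_div_less power_Suc2)
  then have "happy_S e b (n div b) = (\<Sum>d<b. digit_count b d k (n div b) * d ^ e)"
    by (rule Suc.IH)
  then have "happy_S e b n = (n mod b) ^ e + (\<Sum>d<b. digit_count b d k (n div b) * d ^ e)"
    by (subst happy_S_digit[OF assms(1,2)]) (rule arg_cong)
  also have "(n mod b) ^ e = (\<Sum>d<b. of_bool (n mod b = d) * d ^ e)"
    using assms(1) by simp
  finally show ?case
    by (simp only: digit_count.simps distrib_right sum.distrib)
qed

lemma happy_S_base3:
  assumes "e > 0" "n < 3 ^ k"
  shows "happy_S e 3 n = digit_count 3 1 k n + digit_count 3 2 k n * 2 ^ e"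
proof -
  have "{..<3::nat} = {0, 1, 2}" by auto
  then show ?thesis
    using happy_S_eq_sum_digit_count[of 3 e n k] assms by simp
qed

lemma sum_lessThan_mult:
  fixes f :: "nat \<Rightarrow> 'a::comm_monoid_add"
  shows "(\<Sum>n<b * K. f n) = (\<Sum>q<K. \<Sum>r<b. f (b * q + r))"
proof (induction K)
  case 0
  then show ?case by simp
next
  case (Suc K)
  have "(\<Sum>n<b * Suc K. f n) = (\<Sum>n<b * K. f n) + (\<Sum>n = b * K..<b * K + b. f n)"
    using sum.atLeastLessThan_concat[of 0 "b * K" "b * K + b" f]
    by (simp add: lessThan_atLeast0 algebra_simps)
  also have "(\<Sum>n = b * K..<b * K + b. f n) = (\<Sum>r<b. f (b * K + r))"
    using sum.shift_bounds_nat_ivl[of f 0 "b * K" b]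
    by (simp add: lessThan_atLeast0 add.commute)
  finally show ?case
    using Suc.IH by simp
qed

lemma choose_Suc_eq: "Suc n choose c = (n choose c) + (if c = 0 then 0 else n choose (c - 1))"
  by (cases c) simp_all

(* Pascal's rule for the trinomial coefficient k! / (a! b! (k - a - b)!). *)
lemma choose_mult_choose_Suc:
  "(Suc k choose b) * (Suc k - b choose a) =
     (k choose b) * (k - b choose a)
   + (if a = 0 then 0 else (k choose b) * (k - b choose (a - 1)))
   + (if b = 0 then 0 else (k choose (b - 1)) * (Suc k - b choose a))"
proof -
  have "(Suc k choose b) * (Suc k - b choose a) =
      (k choose b) * (Suc k - b choose a)
    + (if b = 0 then 0 else (k choose (b - 1)) * (Suc k - b choose a))"
    by (simp add: choose_Suc_eq[of k b] distrib_right)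
  moreover have "(k choose b) * (Suc k - b choose a) =
      (k choose b) * (k - b choose a) + (if a = 0 then 0 else (k choose b) * (k - b choose (a - 1)))"
  proof (cases "b \<le> k")
    case True
    then have "Suc k - b = Suc (k - b)" by simp
    then show ?thesis by (simp add: choose_Suc_eq[of "k - b" a] distrib_left)
  qed (simp add: binomial_eq_0)
  ultimately show ?thesis by simp
qed

lemma card_lessThan_mult:
  fixes b K :: nat
  shows "card {n. n < b * K \<and> P n} = (\<Sum>r<b. card {q. q < K \<and> P (b * q + r)})"
proof -
  have "card {n. n < b * K \<and> P n} = (\<Sum>n<b * K. of_bool (P n))"
    by (simp add: Collect_conj_eq lessThan_def)
  also have "\<dots> = (\<Sum>q<K. \<Sum>r<b. of_bool (P (b * q + r)))"
    by (rule sum_lessThan_mult)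
  also have "\<dots> = (\<Sum>r<b. \<Sum>q<K. of_bool (P (b * q + r)))"
    by (rule sum.swap)
  finally show ?thesis
    by (simp add: Collect_conj_eq lessThan_def)
qed

lemma card_digit_counts_base3:
  "card {n. n < 3 ^ k \<and> digit_count 3 1 k n = a \<and> digit_count 3 2 k n = b} =
     (k choose b) * (k - b choose a)"
proof (induction k arbitrary: a b)
  case 0
  then show ?case by (cases a; cases b) simp_all
next
  case (Suc k)
  let ?P = "\<lambda>k a b n. digit_count 3 1 k n = a \<and> digit_count 3 2 k n = b"
  have "card {n. n < 3 ^ Suc k \<and> ?P (Suc k) a b n} =
      (\<Sum>r<3. card {q. q < 3 ^ k \<and> ?P (Suc k) a b (3 * q + r)})"
    unfolding power_Suc by (rule card_lessThan_mult)
  also have "\<dots> = card {q. q < 3 ^ k \<and> ?P k a b q}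
    + card {q. q < 3 ^ k \<and> Suc (digit_count 3 1 k q) = a \<and> digit_count 3 2 k q = b}
    + card {q. q < 3 ^ k \<and> digit_count 3 1 k q = a \<and> Suc (digit_count 3 2 k q) = b}"
    by (simp add: lessThan_nat_numeral)
  also have "\<dots> = (Suc k choose b) * (Suc k - b choose a)"
    using Suc.IH choose_mult_choose_Suc[of k b a] by (cases a; cases b) simp_all
  finally show ?case .
qed

lemma happy_of_happy_S:
  assumes "happy e b (happy_S e b n)" "n \<ge> 1"
  shows "happy e b n"
proof -
  obtain l where l: "(happy_S e b ^^ l) (happy_S e b n) = 1"
    using assms(1) unfolding happy_def by blast
  have "(happy_S e b ^^ Suc l) n = (happy_S e b ^^ l) (happy_S e b n)"
    by (simp only: funpow_Suc_right comp_apply)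
  with l have "(happy_S e b ^^ Suc l) n = 1"
    by (simp only:)
  with assms(2) show ?thesis
    unfolding happy_def by (intro conjI exI[of _ "Suc l"]) simp_all
qed

lemma tree_children_eq_fiber:
  assumes "b > 1" "happy e b m" "m \<noteq> 1"
  shows "tree_children e b k m = {n. n < b ^ k \<and> happy_S e b n = m}"
proof (intro set_eqI iffI)
  fix n
  assume "n \<in> {n. n < b ^ k \<and> happy_S e b n = m}"
  then have n: "n < b ^ k" "happy_S e b n = m"
    by simp_all
  have "m \<noteq> 0"
    using assms(2) unfolding happy_def by simp
  then have "n \<noteq> 0"
    using n(2) by (metis happy_S_0)
  moreover have "n \<noteq> 1"
    using n(2) assms(3) happy_S_1[OF assms(1)] by metis
  moreover have "happy e b n"
    using happy_of_happy_S[of e b n] n(2) assms(2) \<open>n \<noteq> 0\<close> by simp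
  ultimately show "n \<in> tree_children e b k m"
    using n unfolding tree_children_def by simp
qed (simp add: tree_children_def)

lemma card_happy_S_fiber_base3:
  assumes "e > 0"
  shows "card {n. n < 3 ^ k \<and> happy_S e 3 n = m} =
    (\<Sum>j = 0..m div 2 ^ e. (k choose j) * (k - j choose (m - j * 2 ^ e)))"
proof -
  let ?D = "\<lambda>j. {n. n < 3 ^ k \<and> digit_count 3 1 k n = m - j * 2 ^ e \<and> digit_count 3 2 k n = j}"
  have fiber: "{n. n < 3 ^ k \<and> happy_S e 3 n = m} = (\<Union>j\<in>{0..m div 2 ^ e}. ?D j)"
  proof (intro set_eqI iffI)
    fix n
    assume "n \<in> {n. n < 3 ^ k \<and> happy_S e 3 n = m}"
    then have "n < 3 ^ k" "digit_count 3 1 k n + digit_count 3 2 k n * 2 ^ e = m"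
      using happy_S_base3[OF assms] by auto
    then show "n \<in> (\<Union>j\<in>{0..m div 2 ^ e}. ?D j)"
      by (auto simp: less_eq_div_iff_mult_less_eq)
  next
    fix n
    assume "n \<in> (\<Union>j\<in>{0..m div 2 ^ e}. ?D j)"
    then obtain j where "j * 2 ^ e \<le> m" "n \<in> ?D j"
      by (auto simp: less_eq_div_iff_mult_less_eq)
    then show "n \<in> {n. n < 3 ^ k \<and> happy_S e 3 n = m}"
      using happy_S_base3[OF assms] by auto
  qed
  have "card {n. n < 3 ^ k \<and> happy_S e 3 n = m} = (\<Sum>j = 0..m div 2 ^ e. card (?D j))"
    unfolding fiber by (rule card_UN_disjoint) auto
  also have "\<dots> = (\<Sum>j = 0..m div 2 ^ e. (k choose j) * (k - j choose (m - j * 2 ^ e)))"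
    by (simp only: card_digit_counts_base3)
  finally show ?thesis .
qed

theorem mainTheorem4:
  fixes e k m :: nat
  assumes "e > 1" and "k \<ge> 1" and "m > 3" and "tree_vertex e 3 k m"
  shows "card (tree_children e 3 k m) =
    (\<Sum>j = 0..m div 2 ^ e. (k choose j) * ((k - j) choose (m - j * 2 ^ e)))"
proof -
  have "happy e 3 m"
    using assms(4) unfolding tree_vertex_def by blast
  then have "tree_children e 3 k m = {n. n < 3 ^ k \<and> happy_S e 3 n = m}"
    using assms(3) by (intro tree_children_eq_fiber) simp_all
  then show ?thesis
    using card_happy_S_fiber_base3[of e k m] assms(1) by simp
qed

end
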